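(* Let $k \in \mathbb N$, $T \leq +\infty$, $0 \leq t_1 < t_2 < T$ and $0 < R \leq 1$. Let $h, h_1, h_2 \in C^0([0,1] \times [0,T)) \cap C^{2,1}((0,1) \times (0,T))$ be classical solutions of $$u_t = u_{rr} + \frac{u_r}{r} - k^2 \frac{\sin(2u)}{2r^2}, \quad 0 < r < 1, \ 0 < t < T,$$ and assume that for each $i \in \{1,2\}$, either $h(0,t) \neq h_i(0,t)$ for all $t \in [0,T)$, or $h(0,t) = h_i(0,t) = m_i\pi \in \pi\mathbb Z$ for all $t \in [0,T)$. If $\Gamma$ is a non-empty (path-)connected component of $\{(r,t) \in [0,R] \times [t_1,t_2]: h_1 < h < h_2\}$ and if $$\max_{(r,t) \in \overline{\Gamma}} h_1 < C < \min_{(r,t) \in \overline{\Gamma}} h_2$$ for some $C \in \mathbb R$, then $$\Gamma \cap \left[ \{r = 0\} \cup \{r = R\} \cup \{t = t_1\} \right] \neq \emptyset.$$ Moreover, no matter $\Gamma$, all these hypotheses (including the existence of such $C$) are satisfied when $h$ is any such solution with $h(0,t) = 0$ for all $t \in [0,T)$, $h_1 = \pi/2$ or $h_1 = \chi_{\alpha}(r) = \pi - 2 \arctan(\alpha^k r^k)$ with $\alpha > 0$, and $h_2 = \pi$.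
   Context: $C^{2,1}$ means continuously differentiable in $t$ and twice continuously differentiable in $r$, with derivatives continuous up to the included boundary. Closures are taken in $\mathbb R^2$. *)

theory Defs
  imports "HOL-Analysis.Analysis"
begin

definition dom_closed :: "ereal \<Rightarrow> (real \<times> real) set" where
  "dom_closed T = {(r,t). 0 \<le> r \<and> r \<le> 1 \<and> 0 \<le> t \<and> ereal t < T}"

definition dom_open :: "ereal \<Rightarrow> (real \<times> real) set" where
  "dom_open T = {(r,t). 0 < r \<and> r < 1 \<and> 0 < t \<and> ereal t < T}"

definition classical_sol :: "nat \<Rightarrow> ereal \<Rightarrow> (real \<Rightarrow> real \<Rightarrow> real) \<Rightarrow> bool" where
  "classical_sol k T u \<longleftrightarrow>
     continuous_on (dom_closed T) (\<lambda>(r,t). u r t) \<and>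
     (\<exists>ur urr ut.
        continuous_on (dom_open T) (\<lambda>(r,t). ur r t) \<and>
        continuous_on (dom_open T) (\<lambda>(r,t). urr r t) \<and>
        continuous_on (dom_open T) (\<lambda>(r,t). ut r t) \<and>
        (\<forall>(r,t)\<in>dom_open T.
           ((\<lambda>s. u s t) has_real_derivative ur r t) (at r) \<and>
           ((\<lambda>s. ur s t) has_real_derivative urr r t) (at r) \<and>
           ((\<lambda>s. u r s) has_real_derivative ut r t) (at t) \<and>
           ut r t = urr r t + ur r t / r - (real k)^2 * sin (2 * u r t) / (2 * r^2)))"

definition origin_cond :: "ereal \<Rightarrow> (real \<Rightarrow> real \<Rightarrow> real) \<Rightarrow> (real \<Rightarrow> real \<Rightarrow> real) \<Rightarrow> bool" where
  "origin_cond T h g \<longleftrightarrow>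
     (\<forall>t. 0 \<le> t \<and> ereal t < T \<longrightarrow> h 0 t \<noteq> g 0 t) \<or>
     (\<exists>m::int. \<forall>t. 0 \<le> t \<and> ereal t < T \<longrightarrow> h 0 t = of_int m * pi \<and> g 0 t = of_int m * pi)"

definition between_set :: "real \<Rightarrow> real \<Rightarrow> real \<Rightarrow> (real \<Rightarrow> real \<Rightarrow> real) \<Rightarrow> (real \<Rightarrow> real \<Rightarrow> real)
     \<Rightarrow> (real \<Rightarrow> real \<Rightarrow> real) \<Rightarrow> (real \<times> real) set" where
  "between_set R t1 t2 h h1 h2 =
     {(r,t). 0 \<le> r \<and> r \<le> R \<and> t1 \<le> t \<and> t \<le> t2 \<and> h1 r t < h r t \<and> h r t < h2 r t}"

end

theory Submission
  imports Defs
begin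

text \<open>
  Suppose the component G avoids r = 0, r = R and t = t1. Points of closure G at its earliest
  time are not in G, so h equals h1 or h2 there, and h \<noteq> C on a bottom slab of G; by the
  symmetry h \<mapsto> - h we may assume h < C at a point q of this slab. On the part Q of closure G
  below q where h \<le> C, the weighted difference exp (- \<mu> t) (h - h1) attains a positive maximum.
  There h1 < h < C < h2, so the maximum lies in G, off the parabolic boundary, and the equation
  gives \<mu> (h - h1) \<le> k^2 (sin 2h1 - sin 2h) / (2 r^2). Away from the axis the right-hand side is
  at most k^2 (h - h1) / r^2, which a large \<mu> absorbs. Near the axis, points of Q outside G
  satisfy h = h1, so the origin condition keeps h and h1 close to the same multiple of \<pi> and
  sin 2h1 \<le> sin 2h.

  For the barriers, h1 > 0 = h on the axis keeps closure G away from r = 0, where h1 < \<pi> = h2;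
  compactness then provides the level C.
\<close>

lemma DERIV_local_max_second:
  fixes f f' :: "real \<Rightarrow> real"
  assumes d: "0 < d"
    and le: "\<forall>y. \<bar>y - x\<bar> < d \<longrightarrow> f y \<le> f x"
    and f': "\<forall>y. \<bar>y - x\<bar> < d \<longrightarrow> (f has_real_derivative f' y) (at y)"
    and f'': "(f' has_real_derivative f'') (at x)"
  shows "f' x = 0" and "f'' \<le> 0"
proof -
  show f'x: "f' x = 0"
    using DERIV_local_max[of f "f' x" x d] f' le d by (auto simp: abs_minus_commute)
  show "f'' \<le> 0"
  proof (rule ccontr)
    assume "\<not> f'' \<le> 0"
    then obtain e where e: "e > 0" "\<forall>h>0. h < e \<longrightarrow> f' x < f' (x + h)"
      using DERIV_pos_inc_right[OF f''] by auto
    define b where "b = x + min e d / 2"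
    have "x < b" using e d by (simp add: b_def)
    then obtain z where z: "x < z" "z < b" "f b - f x = (b - x) * f' z"
      using MVT2[of x b f f'] f' d e by (force simp: b_def)
    have "f' x < f' (x + (z - x))"
      using e z by (intro e(2)[rule_format]) (auto simp: b_def)
    then have "(b - x) * f' z > 0" using z f'x by simp
    then have "f b > f x" using z by linarith
    moreover have "f b \<le> f x" using le d e by (simp add: b_def)
    ultimately show False by simp
  qed
qed

lemma DERIV_nonneg_left_local_max:
  fixes g :: "real \<Rightarrow> real"
  assumes d: "0 < d" and le: "\<forall>y. x - d < y \<and> y \<le> x \<longrightarrow> g y \<le> g x"
    and g': "(g has_real_derivative l) (at x)"
  shows "0 \<le> l"
proof (rule ccontr)
  assume "\<not> 0 \<le> l"
  then obtain e where e: "e > 0" "\<forall>h>0. h < e \<longrightarrow> g x < g (x - h)"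
    using DERIV_neg_dec_left[OF g'] by auto
  have "g x < g (x - min e d / 2)" using e d by simp
  moreover have "g (x - min e d / 2) \<le> g x" using le d e by simp
  ultimately show False by simp
qed

lemma abs_sin_diff_le: "\<bar>sin x - sin y\<bar> \<le> \<bar>x - y\<bar>" for x y :: real
proof -
  have "\<bar>sin x - sin y\<bar> = 2 * \<bar>sin ((x - y) / 2)\<bar> * \<bar>cos ((x + y) / 2)\<bar>"
    by (simp add: sin_diff_sin abs_mult)
  also have "\<dots> \<le> 2 * \<bar>sin ((x - y) / 2)\<bar>"
    by (simp add: mult_left_le)
  also have "\<dots> \<le> 2 * \<bar>(x - y) / 2\<bar>"
    using abs_sin_x_le_abs_x[of "(x - y) / 2"] by simp
  finally show ?thesis by simp
qed

lemma sin_double_mono_near_int_pi: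
  fixes x y :: real and m :: int
  assumes "\<bar>x - m * pi\<bar> < pi / 4" "\<bar>y - m * pi\<bar> < pi / 4" "y \<le> x"
  shows "sin (2 * y) \<le> sin (2 * x)"
proof -
  have periodic: "sin (2 * z) = sin (2 * (z - m * pi))" for z :: real
  proof -
    have "2 * z = 2 * (z - m * pi) + 2 * pi * m" by (simp add: algebra_simps)
    then show ?thesis by (simp only: sin_add sin_int_2pin cos_int_2pin)
  qed
  have "- (pi / 4) < y - m * pi" "x - m * pi < pi / 4"
    using assms(1,2) by linarith+
  then have "sin (2 * (y - m * pi)) \<le> sin (2 * (x - m * pi))"
    using assms(3) by (intro sin_monotone_2pi_le) auto
  then show ?thesis by (simp only: periodic[of x] periodic[of y])
qed

lemma continuous_compact_preimage:
  fixes f :: "'a::t2_space \<Rightarrow> 'b::topological_space"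
  assumes "continuous_on S f" "compact S" "closed T"
  shows "compact {x \<in> S. f x \<in> T}"
proof -
  have "closed (S \<inter> f -` T)"
    using assms by (intro continuous_closed_preimage compact_imp_closed)
  then have "compact (S \<inter> (S \<inter> f -` T))"
    by (rule compact_Int_closed[OF assms(2)])
  then show ?thesis by (simp add: vimage_def Collect_conj_eq Int_assoc)
qed

lemma compact_fst_pos_imp_bounded_below:
  assumes "compact K" "\<forall>p\<in>K. 0 < fst p"
  obtains \<delta> :: real where "0 < \<delta>" "\<forall>p\<in>K. \<delta> \<le> fst p"
proof (cases "K = {}")
  case True
  then show ?thesis using that[of 1] by simp
next
  case False
  then obtain z where "z \<in> K" "\<forall>p\<in>K. fst z \<le> fst p"
    using continuous_attains_inf[OF assms(1) False continuous_on_fst[OF continuous_on_id]] by auto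
  then show ?thesis using that[of "fst z"] assms(2) by auto
qed

lemma continuous_on_less_nbhd:
  fixes f :: "'a::metric_space \<Rightarrow> real"
  assumes "continuous_on S f" "p \<in> S" "f p < c"
  obtains \<rho> where "0 < \<rho>" "\<forall>y\<in>S. dist y p < \<rho> \<longrightarrow> f y < c"
proof -
  obtain d where "0 < d" "\<forall>y\<in>S. dist y p < d \<longrightarrow> dist (f y) (f p) < c - f p"
    using assms unfolding continuous_on_iff by (metis diff_gt_0_iff_gt)
  then show ?thesis using that[of d] by (force simp: dist_real_def)
qed

lemma connected_component_relative_ball_subset:
  fixes S :: "'a::real_normed_vector set"
  assumes "convex S" "B \<subseteq> S" "p \<in> closure (connected_component_set B x)"
    and "0 < \<rho>" "\<forall>y\<in>S. dist y p < \<rho> \<longrightarrow> y \<in> B"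
  shows "\<forall>y\<in>S. dist y p < \<rho> \<longrightarrow> y \<in> connected_component_set B x"
proof -
  define G where "G = connected_component_set B x"
  define K where "K = S \<inter> ball p \<rho>"
  have "connected K"
    unfolding K_def by (intro convex_connected convex_Int assms(1) convex_ball)
  obtain y where y: "y \<in> G" "dist y p < \<rho>"
    using assms(3,4) closure_approachable unfolding G_def by blast
  have "y \<in> B" using y connected_component_subset unfolding G_def by blast
  then have "y \<in> K" using y assms(2) by (auto simp: K_def dist_commute)
  have "K \<subseteq> B" using assms(5) by (auto simp: K_def dist_commute)
  have "K \<subseteq> G"
    using connected_component_maximal[OF \<open>y \<in> K\<close> \<open>connected K\<close> \<open>K \<subseteq> B\<close>] y(1)
      connected_component_eq unfolding G_def by blast
  then show ?thesis by (auto simp: K_def G_def dist_commute)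
qed

lemma compact_continuous_below_level:
  fixes f :: "'a::topological_space \<Rightarrow> real"
  assumes "compact K" "continuous_on K f" "\<forall>x\<in>K. f x < c"
  obtains C where "\<forall>x\<in>K. f x < C \<and> C < c"
proof (cases "K = {}")
  case True
  then show ?thesis using that[of "c - 1"] by simp
next
  case False
  then obtain y where "y \<in> K" "\<forall>x\<in>K. f x \<le> f y"
    using continuous_attains_sup[OF assms(1) _ assms(2)] by blast
  then show ?thesis
    using that[of "(f y + c) / 2"] assms(3) by fastforce
qed

section \<open>Classical solutions\<close>

lemma classical_solE:
  assumes "classical_sol k T u"
  obtains ur urr ut where
    "\<And>r t. (r, t) \<in> dom_open T \<Longrightarrow> ((\<lambda>s. u s t) has_real_derivative ur r t) (at r)"
    "\<And>r t. (r, t) \<in> dom_open T \<Longrightarrow> ((\<lambda>s. ur s t) has_real_derivative urr r t) (at r)"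
    "\<And>r t. (r, t) \<in> dom_open T \<Longrightarrow> ((\<lambda>s. u r s) has_real_derivative ut r t) (at t)"
    "\<And>r t. (r, t) \<in> dom_open T \<Longrightarrow>
       ut r t = urr r t + ur r t / r - (real k)^2 * sin (2 * u r t) / (2 * r^2)"
  using assms unfolding classical_sol_def by fast

lemma classical_sol_continuous_on:
  assumes "classical_sol k T u" "S \<subseteq> dom_closed T"
  shows "continuous_on S (\<lambda>p. u (fst p) (snd p))"
  using assms continuous_on_subset unfolding classical_sol_def case_prod_unfold by blast

lemma classical_sol_uminus:
  assumes "classical_sol k T u"
  shows "classical_sol k T (\<lambda>r t. - u r t)"
proof -
  obtain ur urr ut where
    c: "continuous_on (dom_open T) (\<lambda>(r,t). ur r t)" "continuous_on (dom_open T) (\<lambda>(r,t). urr r t)"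
       "continuous_on (dom_open T) (\<lambda>(r,t). ut r t)" "continuous_on (dom_closed T) (\<lambda>(r,t). u r t)"
    and e: "\<forall>(r,t)\<in>dom_open T.
        ((\<lambda>s. u s t) has_real_derivative ur r t) (at r) \<and>
        ((\<lambda>s. ur s t) has_real_derivative urr r t) (at r) \<and>
        ((\<lambda>s. u r s) has_real_derivative ut r t) (at t) \<and>
        ut r t = urr r t + ur r t / r - (real k)^2 * sin (2 * u r t) / (2 * r^2)"
    using assms unfolding classical_sol_def by blast
  have "continuous_on (dom_closed T) (\<lambda>(r,t). - u r t)"
    "continuous_on (dom_open T) (\<lambda>(r,t). - ur r t)"
    "continuous_on (dom_open T) (\<lambda>(r,t). - urr r t)"
    "continuous_on (dom_open T) (\<lambda>(r,t). - ut r t)"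
    using c by (simp_all add: case_prod_unfold continuous_on_minus)
  moreover have "\<forall>(r,t)\<in>dom_open T.
      ((\<lambda>s. - u s t) has_real_derivative - ur r t) (at r) \<and>
      ((\<lambda>s. - ur s t) has_real_derivative - urr r t) (at r) \<and>
      ((\<lambda>s. - u r s) has_real_derivative - ut r t) (at t) \<and>
      - ut r t = - urr r t + - ur r t / r - (real k)^2 * sin (2 * - u r t) / (2 * r^2)"
    using e by (auto intro!: DERIV_minus)
  ultimately show ?thesis
    unfolding classical_sol_def by blast
qed

lemma origin_cond_uminus:
  "origin_cond T h g \<Longrightarrow> origin_cond T (\<lambda>r t. - h r t) (\<lambda>r t. - g r t)"
  unfolding origin_cond_def by (metis minus_equation_iff mult_minus_left of_int_minus)

lemma between_set_uminus:
  "between_set R t1 t2 (\<lambda>r t. - h r t) (\<lambda>r t. - h2 r t) (\<lambda>r t. - h1 r t) = between_set R t1 t2 h h1 h2"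
  by (auto simp: between_set_def)

lemma classical_sol_diff_at_space_max:
  assumes u: "classical_sol k T u" and w: "classical_sol k T w"
    and p: "(r0, t0) \<in> dom_open T" and d: "0 < d"
    and space_max: "\<forall>r. \<bar>r - r0\<bar> < d \<longrightarrow> u r t0 - w r t0 \<le> u r0 t0 - w r0 t0"
    and dt: "((\<lambda>t. u r0 t - w r0 t) has_real_derivative D) (at t0)"
  shows "D \<le> (real k)^2 * (sin (2 * w r0 t0) - sin (2 * u r0 t0)) / (2 * r0^2)"
proof -
  obtain ur urr ut where ur: "\<And>r t. (r, t) \<in> dom_open T \<Longrightarrow> ((\<lambda>s. u s t) has_real_derivative ur r t) (at r)"
    and urr: "\<And>r t. (r, t) \<in> dom_open T \<Longrightarrow> ((\<lambda>s. ur s t) has_real_derivative urr r t) (at r)"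
    and ut: "\<And>r t. (r, t) \<in> dom_open T \<Longrightarrow> ((\<lambda>s. u r s) has_real_derivative ut r t) (at t)"
    and u_eq: "\<And>r t. (r, t) \<in> dom_open T \<Longrightarrow>
       ut r t = urr r t + ur r t / r - (real k)^2 * sin (2 * u r t) / (2 * r^2)"
    using classical_solE[OF u] by metis
  obtain wr wrr wt where wr: "\<And>r t. (r, t) \<in> dom_open T \<Longrightarrow> ((\<lambda>s. w s t) has_real_derivative wr r t) (at r)"
    and wrr: "\<And>r t. (r, t) \<in> dom_open T \<Longrightarrow> ((\<lambda>s. wr s t) has_real_derivative wrr r t) (at r)"
    and wt: "\<And>r t. (r, t) \<in> dom_open T \<Longrightarrow> ((\<lambda>s. w r s) has_real_derivative wt r t) (at t)"
    and w_eq: "\<And>r t. (r, t) \<in> dom_open T \<Longrightarrow>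
       wt r t = wrr r t + wr r t / r - (real k)^2 * sin (2 * w r t) / (2 * r^2)"
    using classical_solE[OF w] by metis
  define e where "e = min d (min r0 (1 - r0))"
  have e: "0 < e" using d p by (simp add: e_def dom_open_def)
  have near: "(r, t0) \<in> dom_open T" if "\<bar>r - r0\<bar> < e" for r
    using that p unfolding e_def dom_open_def by (auto simp: abs_less_iff)
  have "\<forall>r. \<bar>r - r0\<bar> < e \<longrightarrow> u r t0 - w r t0 \<le> u r0 t0 - w r0 t0"
    using space_max unfolding e_def by auto
  moreover have "\<forall>r. \<bar>r - r0\<bar> < e \<longrightarrow>
      ((\<lambda>r. u r t0 - w r t0) has_real_derivative ur r t0 - wr r t0) (at r)"
    using near by (auto intro!: DERIV_diff ur wr)
  moreover have "((\<lambda>r. ur r t0 - wr r t0) has_real_derivative urr r0 t0 - wrr r0 t0) (at r0)"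
    by (intro DERIV_diff urr wrr p)
  ultimately have "ur r0 t0 - wr r0 t0 = 0" and "urr r0 t0 - wrr r0 t0 \<le> 0"
    by (rule DERIV_local_max_second[OF e])+
  moreover have "D = ut r0 t0 - wt r0 t0"
    using DERIV_unique[OF dt DERIV_diff[OF ut[OF p] wt[OF p]]] .
  moreover have "ut r0 t0 - wt r0 t0 = urr r0 t0 - wrr r0 t0 + (ur r0 t0 - wr r0 t0) / r0
      + (real k)^2 * (sin (2 * w r0 t0) - sin (2 * u r0 t0)) / (2 * r0^2)"
    using u_eq[OF p] w_eq[OF p] by (simp add: diff_divide_distrib right_diff_distrib)
  ultimately show ?thesis by simp
qed

lemma classical_sol_diff_at_backward_max:
  assumes u: "classical_sol k T u" and w: "classical_sol k T w"
    and p: "(r0, t0) \<in> dom_open T" and d: "0 < d"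
    and max: "\<forall>r t. dist (r, t) (r0, t0) < d \<longrightarrow> t \<le> t0 \<longrightarrow>
      exp (- \<mu> * t) * (u r t - w r t) \<le> exp (- \<mu> * t0) * (u r0 t0 - w r0 t0)"
  shows "\<mu> * (u r0 t0 - w r0 t0) \<le> (real k)^2 * (sin (2 * w r0 t0) - sin (2 * u r0 t0)) / (2 * r0^2)"
proof -
  have space_max: "\<forall>r. \<bar>r - r0\<bar> < d \<longrightarrow> u r t0 - w r t0 \<le> u r0 t0 - w r0 t0"
  proof (intro allI impI)
    fix r assume "\<bar>r - r0\<bar> < d"
    then have "exp (- \<mu> * t0) * (u r t0 - w r t0) \<le> exp (- \<mu> * t0) * (u r0 t0 - w r0 t0)"
      using max by (simp add: dist_Pair_Pair dist_real_def)
    then show "u r t0 - w r t0 \<le> u r0 t0 - w r0 t0" by simp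
  qed
  have time_max: "\<forall>t. t0 - d < t \<and> t \<le> t0 \<longrightarrow>
      exp (- \<mu> * t) * (u r0 t - w r0 t) \<le> exp (- \<mu> * t0) * (u r0 t0 - w r0 t0)"
    using max by (auto simp: dist_Pair_Pair dist_real_def)
  obtain ut wt where "((\<lambda>t. u r0 t) has_real_derivative ut) (at t0)" "((\<lambda>t. w r0 t) has_real_derivative wt) (at t0)"
    using classical_solE[OF u] classical_solE[OF w] p by metis
  from DERIV_diff[OF this]
  have dt: "((\<lambda>t. u r0 t - w r0 t) has_real_derivative ut - wt) (at t0)" .
  have "((\<lambda>t. exp (- \<mu> * t)) has_real_derivative exp (- \<mu> * t0) * (- \<mu>)) (at t0)"
    by (auto intro!: derivative_eq_intros)
  from DERIV_mult[OF this dt]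
  have "0 \<le> exp (- \<mu> * t0) * (- \<mu>) * (u r0 t0 - w r0 t0) + (ut - wt) * exp (- \<mu> * t0)"
    using d time_max by (rule DERIV_nonneg_left_local_max[rotated 2])
  then have "0 \<le> exp (- \<mu> * t0) * ((ut - wt) - \<mu> * (u r0 t0 - w r0 t0))"
    by (simp add: algebra_simps)
  then have "\<mu> * (u r0 t0 - w r0 t0) \<le> ut - wt"
    by (simp add: zero_le_mult_iff)
  also have "\<dots> \<le> (real k)^2 * (sin (2 * w r0 t0) - sin (2 * u r0 t0)) / (2 * r0^2)"
    by (rule classical_sol_diff_at_space_max[OF u w p d space_max dt])
  finally show ?thesis .
qed

lemma classical_sol_diff_no_positive_backward_max:
  fixes k :: nat and \<delta> :: real
  defines "\<mu> \<equiv> (real k)^2 / \<delta>^2 + 1"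
  assumes u: "classical_sol k T u" and w: "classical_sol k T w"
    and p: "(r0, t0) \<in> dom_open T" and d: "0 < d" and \<delta>: "0 < \<delta>"
    and pos: "w r0 t0 < u r0 t0"
    and near_axis: "r0 < \<delta> \<Longrightarrow> sin (2 * w r0 t0) \<le> sin (2 * u r0 t0)"
    and max: "\<forall>r t. dist (r, t) (r0, t0) < d \<longrightarrow> t \<le> t0 \<longrightarrow>
      exp (- \<mu> * t) * (u r t - w r t) \<le> exp (- \<mu> * t0) * (u r0 t0 - w r0 t0)"
  shows False
proof -
  define W where "W = u r0 t0 - w r0 t0"
  define S where "S = sin (2 * w r0 t0) - sin (2 * u r0 t0)"
  have "0 < W" using pos by (simp add: W_def)
  have key: "\<mu> * W \<le> (real k)^2 * S / (2 * r0^2)"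
    unfolding W_def S_def by (rule classical_sol_diff_at_backward_max[OF u w p d max])
  have "(real k)^2 * S / (2 * r0^2) < \<mu> * W"
  proof (cases "r0 < \<delta>")
    case True
    then have "(real k)^2 * S / (2 * r0^2) \<le> 0"
      using near_axis by (simp add: S_def divide_nonpos_nonneg mult_nonneg_nonpos)
    also have "0 < \<mu> * W"
      using \<open>0 < W\<close> by (simp add: \<mu>_def add_nonneg_pos)
    finally show ?thesis .
  next
    case False
    have "S \<le> 2 * W"
      using abs_sin_diff_le[of "2 * w r0 t0" "2 * u r0 t0"] pos by (simp add: S_def W_def abs_le_iff)
    then have "(real k)^2 * S / (2 * r0^2) \<le> (real k)^2 * (2 * W) / (2 * r0^2)"
      by (intro divide_right_mono mult_left_mono) auto
    also have "\<dots> = (real k)^2 * W / r0^2"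
      by simp
    also have "\<dots> \<le> (real k)^2 * W / \<delta>^2"
      using False \<delta> \<open>0 < W\<close> by (intro divide_left_mono mult_nonneg_nonneg power_mono) auto
    also have "\<dots> < \<mu> * W"
      using \<open>0 < W\<close> by (simp add: \<mu>_def algebra_simps)
    finally show ?thesis .
  qed
  then show False using key by simp
qed

lemma origin_cond_exceptional_set:
  assumes oc: "origin_cond T h g" and Q: "compact Q" "Q \<subseteq> dom_closed T"
    and cont: "continuous_on Q (\<lambda>p. h (fst p) (snd p))" "continuous_on Q (\<lambda>p. g (fst p) (snd p))"
    and eq0: "\<forall>p\<in>Q. fst p = 0 \<longrightarrow> h (fst p) (snd p) = g (fst p) (snd p)"
  obtains Z where "compact Z" "\<forall>p\<in>Z. 0 < fst p"
    "\<forall>p\<in>Q - Z. g (fst p) (snd p) \<le> h (fst p) (snd p) \<longrightarrow>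
       sin (2 * g (fst p) (snd p)) \<le> sin (2 * h (fst p) (snd p))"
proof -
  have Q_dom: "0 \<le> fst p" "0 \<le> snd p" "ereal (snd p) < T" if "p \<in> Q" for p
    using that Q(2) by (auto simp: dom_closed_def)
  from oc consider (apart) "\<forall>t. 0 \<le> t \<and> ereal t < T \<longrightarrow> h 0 t \<noteq> g 0 t"
    | (multiple) m :: int where "\<forall>t. 0 \<le> t \<and> ereal t < T \<longrightarrow> h 0 t = m * pi \<and> g 0 t = m * pi"
    unfolding origin_cond_def by blast
  then show ?thesis
  proof cases
    case apart
    have "fst p \<noteq> 0" if "p \<in> Q" for p
    proof
      assume "fst p = 0"
      then have "h 0 (snd p) = g 0 (snd p)" using eq0 that by auto
      then show False using apart Q_dom that by blast
    qed
    then have "\<forall>p\<in>Q. 0 < fst p" using Q_dom(1) by (auto simp: less_le)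
    then show ?thesis using that[of Q] Q(1) by blast
  next
    case (multiple m)
    define Z where "Z = {p \<in> Q. max \<bar>h (fst p) (snd p) - m * pi\<bar> \<bar>g (fst p) (snd p) - m * pi\<bar> \<in> {pi / 4..}}"
    have "compact Z"
      unfolding Z_def using Q(1) cont by (intro continuous_compact_preimage continuous_intros) auto
    moreover have "fst p \<noteq> 0" if "p \<in> Z" for p
    proof
      assume "fst p = 0"
      then have "h (fst p) (snd p) = m * pi" "g (fst p) (snd p) = m * pi"
        using multiple Q_dom that by (auto simp: Z_def)
      then show False using that pi_gt_zero by (simp add: Z_def)
    qed
    then have "\<forall>p\<in>Z. 0 < fst p" using Q_dom(1) by (auto simp: Z_def less_le)
    moreover have "sin (2 * g (fst p) (snd p)) \<le> sin (2 * h (fst p) (snd p))"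
      if "p \<in> Q - Z" "g (fst p) (snd p) \<le> h (fst p) (snd p)" for p
    proof -
      have "max \<bar>h (fst p) (snd p) - m * pi\<bar> \<bar>g (fst p) (snd p) - m * pi\<bar> < pi / 4"
        using that(1) unfolding Z_def by auto
      then show ?thesis
        using that(2) unfolding max_less_iff_conj by (intro sin_double_mono_near_int_pi[of _ m]) auto
    qed
    ultimately show ?thesis using that[of Z] by (auto simp: Z_def)
  qed
qed

lemma origin_cond_sin_double_mono:
  assumes "origin_cond T h g" "compact Q" "Q \<subseteq> dom_closed T"
    "continuous_on Q (\<lambda>p. h (fst p) (snd p))" "continuous_on Q (\<lambda>p. g (fst p) (snd p))"
    "\<forall>p\<in>Q. fst p = 0 \<longrightarrow> h (fst p) (snd p) = g (fst p) (snd p)"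
  obtains \<delta> where "0 < \<delta>"
    "\<forall>p\<in>Q. fst p < \<delta> \<longrightarrow> g (fst p) (snd p) \<le> h (fst p) (snd p) \<longrightarrow>
       sin (2 * g (fst p) (snd p)) \<le> sin (2 * h (fst p) (snd p))"
proof -
  obtain Z where "compact Z" "\<forall>p\<in>Z. 0 < fst p"
    and mono: "\<forall>p\<in>Q - Z. g (fst p) (snd p) \<le> h (fst p) (snd p) \<longrightarrow>
       sin (2 * g (fst p) (snd p)) \<le> sin (2 * h (fst p) (snd p))"
    using origin_cond_exceptional_set[OF assms] by blast
  then obtain \<delta> where "0 < \<delta>" "\<forall>p\<in>Z. \<delta> \<le> fst p"
    using compact_fst_pos_imp_bounded_below by blast
  then show ?thesis
    using that[of \<delta>] mono by force
qed

lemma classical_sol_const: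
  assumes "sin (2 * c) = 0"
  shows "classical_sol k T (\<lambda>r t. c)"
  unfolding classical_sol_def
  by (intro conjI exI[of _ "\<lambda>r t. 0"]) (simp_all add: assms)

lemma sin_double_arctan: "sin (2 * arctan s) = 2 * s / (1 + s^2)"
proof -
  have "sin (2 * arctan s) = 2 * sin (arctan s) * cos (arctan s)"
    by (rule sin_double)
  also have "\<dots> = 2 * s / (sqrt (1 + s^2))^2"
    by (simp add: sin_arctan cos_arctan power2_eq_square)
  also have "\<dots> = 2 * s / (1 + s^2)"
    by (simp add: add_nonneg_nonneg)
  finally show ?thesis .
qed

lemma stationary_arctan_has_real_derivative:
  fixes \<alpha> r :: real
  assumes "0 < r"
  shows "((\<lambda>r. pi - 2 * arctan (\<alpha> ^ k * r ^ k)) has_real_derivative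
    - real k * sin (pi - 2 * arctan (\<alpha> ^ k * r ^ k)) / r) (at r)"
proof -
  define chi where "chi r = pi - 2 * arctan (\<alpha> ^ k * r ^ k)" for r
  define s where "s = \<alpha> ^ k * r ^ k"
  have "((\<lambda>r. \<alpha> ^ k * r ^ k) has_real_derivative \<alpha> ^ k * (real k * r ^ (k - 1))) (at r)"
    by (auto intro!: derivative_eq_intros)
  moreover have "\<alpha> ^ k * (real k * r ^ (k - 1)) = real k * s / r"
    using assms by (cases k) (simp_all add: s_def field_simps)
  ultimately have "((\<lambda>r. \<alpha> ^ k * r ^ k) has_real_derivative real k * s / r) (at r)"
    by simp
  from DERIV_chain2[OF DERIV_arctan this]
  have "((\<lambda>r. arctan (\<alpha> ^ k * r ^ k)) has_real_derivative inverse (1 + s^2) * (real k * s / r)) (at r)"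
    by (simp add: s_def)
  then have deriv: "(chi has_real_derivative 0 - 2 * (inverse (1 + s^2) * (real k * s / r))) (at r)"
    unfolding chi_def[abs_def] by (intro DERIV_diff DERIV_const DERIV_cmult)
  have "sin (chi r) = 2 * s / (1 + s^2)"
    by (simp add: chi_def s_def sin_double_arctan)
  then have "0 - 2 * (inverse (1 + s^2) * (real k * s / r)) = - real k * sin (chi r) / r"
    by (simp add: field_simps)
  with deriv show ?thesis unfolding chi_def[abs_def] by (simp only:)
qed

lemma classical_sol_stationary_arctan:
  fixes \<alpha> :: real
  shows "classical_sol k T (\<lambda>r t. pi - 2 * arctan (\<alpha> ^ k * r ^ k))"
proof -
  define chi where "chi r = pi - 2 * arctan (\<alpha> ^ k * r ^ k)" for r :: real
  \<comment> \<open>chi solves r chi' = - k sin chi; differentiating once more gives the stationary equation\<close>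
  have dchi: "(chi has_real_derivative - real k * sin (chi r) / r) (at r)" if "0 < r" for r
    using stationary_arctan_has_real_derivative[OF that] unfolding chi_def .
  define ur where "ur r t = - real k * sin (chi r) / r" for r t :: real
  define urr where "urr r t = real k * sin (chi r) * (real k * cos (chi r) + 1) / r^2" for r t :: real
  have dur: "((\<lambda>s. ur s t) has_real_derivative urr r t) (at r)" if "0 < r" for r t
  proof -
    have "((\<lambda>s. sin (chi s)) has_real_derivative cos (chi r) * (- real k * sin (chi r) / r)) (at r)"
      using DERIV_chain2[OF DERIV_sin dchi[OF that]] .
    then have "((\<lambda>s. - real k * sin (chi s) / s) has_real_derivative
        (- real k * (cos (chi r) * (- real k * sin (chi r) / r)) * r - - real k * sin (chi r) * 1) / (r * r)) (at r)"
      using that by (intro DERIV_divide DERIV_cmult DERIV_ident) auto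
    moreover have "(- real k * (cos (chi r) * (- real k * sin (chi r) / r)) * r - - real k * sin (chi r) * 1) / (r * r)
        = urr r t"
      using that by (simp add: urr_def power2_eq_square field_simps)
    ultimately show ?thesis by (simp only: ur_def)
  qed
  have equation: "0 = urr r t + ur r t / r - (real k)^2 * sin (2 * chi r) / (2 * r^2)" if "0 < r" for r t
    unfolding sin_double using that by (simp add: ur_def urr_def power2_eq_square field_simps)
  have cont: "continuous_on (dom_open T) (\<lambda>(r, t). ur r t)" "continuous_on (dom_open T) (\<lambda>(r, t). urr r t)"
    unfolding ur_def urr_def chi_def case_prod_unfold
    by (auto intro!: continuous_intros simp: dom_open_def)
  have cont0: "continuous_on (dom_closed T) (\<lambda>(r, t). chi r)"
    unfolding chi_def case_prod_unfold by (intro continuous_intros)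
  have derivs: "\<forall>(r, t)\<in>dom_open T.
      (chi has_real_derivative ur r t) (at r) \<and>
      ((\<lambda>s. ur s t) has_real_derivative urr r t) (at r) \<and>
      ((\<lambda>s. chi r) has_real_derivative 0) (at t) \<and>
      0 = urr r t + ur r t / r - (real k)^2 * sin (2 * chi r) / (2 * r^2)"
    using dchi dur equation by (auto simp: dom_open_def ur_def)
  show ?thesis
    unfolding classical_sol_def chi_def[symmetric]
    by (rule conjI[OF cont0], rule exI[of _ ur], rule exI[of _ urr], rule exI[of _ "\<lambda>r t. 0"])
      (use cont derivs in simp)
qed

lemma pi_minus_double_arctan_pos: "0 < pi - 2 * arctan x"
  using arctan_ubound[of x] by simp

lemma pi_minus_double_arctan_less_pi: "0 < x \<Longrightarrow> pi - 2 * arctan x < pi"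
  by (simp add: zero_less_arctan_iff)

lemma stationary_barriers:
  assumes h0: "\<forall>t. 0 \<le> t \<and> ereal t < T \<longrightarrow> h 0 t = 0"
    and h1: "h1 = (\<lambda>r t. pi / 2) \<or> (\<exists>\<alpha>>0. h1 = (\<lambda>r t. pi - 2 * arctan (\<alpha> ^ k * r ^ k)))"
    and h2: "h2 = (\<lambda>r t. pi)"
  shows "classical_sol k T h1" "classical_sol k T h2" "origin_cond T h h1" "origin_cond T h h2"
proof -
  show "classical_sol k T h1"
    using h1 classical_sol_const[of "pi / 2"] classical_sol_stationary_arctan by auto
  show "classical_sol k T h2"
    using h2 classical_sol_const[of pi] by simp
  show "origin_cond T h h1" "origin_cond T h h2"
    using h0 h1 h2 pi_minus_double_arctan_pos unfolding origin_cond_def by auto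
qed

section \<open>Components of the region between two solutions\<close>

locale between_component =
  fixes k :: nat and T :: ereal and t1 t2 R :: real and h h1 h2 :: "real \<Rightarrow> real \<Rightarrow> real"
    and x :: "real \<times> real" and G :: "(real \<times> real) set"
  assumes t1: "0 \<le> t1" and t2T: "ereal t2 < T" and R1: "R \<le> 1"
    and sol_h: "classical_sol k T h" and sol_h1: "classical_sol k T h1" and sol_h2: "classical_sol k T h2"
    and x_between: "x \<in> between_set R t1 t2 h h1 h2"
    and G_eq: "G = connected_component_set (between_set R t1 t2 h h1 h2) x"
begin

abbreviation "Rect \<equiv> {0..R} \<times> {t1..t2}"
abbreviation "B \<equiv> between_set R t1 t2 h h1 h2"
abbreviation "parabolic_boundary \<equiv> {p. fst p = 0} \<union> {p. fst p = R} \<union> {p. snd p = t1}"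

lemma between_set_eq:
  "B = {p \<in> Rect. h1 (fst p) (snd p) < h (fst p) (snd p) \<and> h (fst p) (snd p) < h2 (fst p) (snd p)}"
  by (auto simp: between_set_def)

lemma rect_subset_dom_closed: "Rect \<subseteq> dom_closed T"
  using t1 R1 le_less_trans[OF _ t2T] by (auto simp: dom_closed_def)

lemma continuous_on_h: "continuous_on Rect (\<lambda>p. h (fst p) (snd p))"
  and continuous_on_h1: "continuous_on Rect (\<lambda>p. h1 (fst p) (snd p))"
  and continuous_on_h2: "continuous_on Rect (\<lambda>p. h2 (fst p) (snd p))"
  using sol_h sol_h1 sol_h2 rect_subset_dom_closed by (blast intro: classical_sol_continuous_on)+

lemma component_subset: "G \<subseteq> B"
  using G_eq connected_component_subset by blast

lemma x_in_component: "x \<in> G"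
  using G_eq x_between by simp

lemma closure_component_subset_rect: "closure G \<subseteq> Rect"
  using component_subset by (intro closure_minimal) (auto simp: between_set_eq closed_Times)

lemma compact_closure_component: "compact (closure G)"
proof -
  have "bounded Rect" by (intro compact_imp_bounded compact_Times) simp_all
  then show ?thesis
    using component_subset by (auto simp: between_set_eq intro: bounded_subset)
qed

lemma closure_component_between:
  assumes "p \<in> closure G"
  shows "h1 (fst p) (snd p) \<le> h (fst p) (snd p)" "h (fst p) (snd p) \<le> h2 (fst p) (snd p)"
proof -
  have cont: "continuous_on (closure G) (\<lambda>p. h (fst p) (snd p) - h1 (fst p) (snd p))"
    "continuous_on (closure G) (\<lambda>p. h2 (fst p) (snd p) - h (fst p) (snd p))"
    using closure_component_subset_rect continuous_on_h continuous_on_h1 continuous_on_h2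
    by (auto intro: continuous_on_diff continuous_on_subset)
  show "h1 (fst p) (snd p) \<le> h (fst p) (snd p)" "h (fst p) (snd p) \<le> h2 (fst p) (snd p)"
    using continuous_ge_on_closure[OF cont(1) assms, of 0] continuous_ge_on_closure[OF cont(2) assms, of 0]
      component_subset by (force simp: between_set_eq)+
qed

lemma between_set_relative_open:
  assumes "p \<in> B"
  obtains \<rho> where "0 < \<rho>" "\<forall>y\<in>Rect. dist y p < \<rho> \<longrightarrow> y \<in> B"
proof -
  have p: "p \<in> Rect" "h1 (fst p) (snd p) - h (fst p) (snd p) < 0" "h (fst p) (snd p) - h2 (fst p) (snd p) < 0"
    using assms by (auto simp: between_set_eq)
  obtain a where "0 < a" "\<forall>y\<in>Rect. dist y p < a \<longrightarrow> h1 (fst y) (snd y) - h (fst y) (snd y) < 0"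
    using continuous_on_less_nbhd[OF continuous_on_diff[OF continuous_on_h1 continuous_on_h] p(1,2)] .
  moreover obtain b where "0 < b" "\<forall>y\<in>Rect. dist y p < b \<longrightarrow> h (fst y) (snd y) - h2 (fst y) (snd y) < 0"
    using continuous_on_less_nbhd[OF continuous_on_diff[OF continuous_on_h continuous_on_h2] p(1,3)] .
  ultimately show ?thesis
    using that[of "min a b"] by (auto simp: between_set_eq)
qed

lemma component_relative_open:
  assumes "p \<in> closure G" "p \<in> B"
  obtains \<rho> where "0 < \<rho>" "\<forall>y\<in>Rect. dist y p < \<rho> \<longrightarrow> y \<in> G"
proof -
  obtain \<rho> where "0 < \<rho>" "\<forall>y\<in>Rect. dist y p < \<rho> \<longrightarrow> y \<in> B"
    using between_set_relative_open[OF assms(2)] .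
  then show ?thesis
    using that connected_component_relative_ball_subset[of Rect B p x \<rho>] assms(1)
    by (simp add: G_eq convex_Times between_set_eq subset_iff)
qed

lemma closure_component_inter_between: "p \<in> closure G \<Longrightarrow> p \<in> B \<Longrightarrow> p \<in> G"
  using component_relative_open between_set_eq by (metis (no_types, lifting) dist_self mem_Collect_eq)

lemma closure_component_boundary_values:
  assumes "p \<in> closure G" "p \<notin> G"
  shows "h (fst p) (snd p) = h1 (fst p) (snd p) \<or> h (fst p) (snd p) = h2 (fst p) (snd p)"
  using assms closure_component_between[OF assms(1)] closure_component_inter_between
    closure_component_subset_rect by (force simp: between_set_eq)

lemma component_backward_nbhd:
  assumes "G \<inter> parabolic_boundary = {}" "p \<in> G"
  obtains d where "0 < d" "0 < fst p" "fst p < R" "t1 < snd p"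
    "\<And>y t. dist (y, t) p < d \<Longrightarrow> t \<le> snd p \<Longrightarrow> (y, t) \<in> G"
proof -
  have "p \<in> B" using assms(2) component_subset by blast
  then obtain \<rho> where \<rho>: "0 < \<rho>" "\<forall>y\<in>Rect. dist y p < \<rho> \<longrightarrow> y \<in> G"
    using component_relative_open assms(2) closure_subset by blast
  have p: "0 < fst p" "fst p < R" "t1 < snd p" "snd p \<le> t2"
    using assms \<open>p \<in> B\<close> by (auto simp: between_set_eq less_le)
  define d where "d = min \<rho> (min (fst p) (min (R - fst p) (snd p - t1)))"
  have "(y, t) \<in> G" if "dist (y, t) p < d" "t \<le> snd p" for y t
  proof -
    have "\<bar>y - fst p\<bar> < d" "\<bar>t - snd p\<bar> < d"
      using that(1) dist_fst_le[of "(y, t)" p] dist_snd_le[of "(y, t)" p] by (auto simp: dist_real_def)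
    then have "(y, t) \<in> Rect" using that(2) p by (auto simp: d_def)
    then show ?thesis using \<rho> that(1) by (auto simp: d_def)
  qed
  moreover have "0 < d" using \<rho>(1) p by (simp add: d_def)
  ultimately show ?thesis using that p by blast
qed

lemma earliest_point_not_in_component:
  assumes "G \<inter> parabolic_boundary = {}" "p \<in> closure G" "\<forall>y\<in>closure G. snd p \<le> snd y"
  shows "p \<notin> G"
proof
  assume "p \<in> G"
  then obtain d where "0 < d" "t1 < snd p"
    and nbhd: "\<And>y t. dist (y, t) p < d \<Longrightarrow> t \<le> snd p \<Longrightarrow> (y, t) \<in> G"
    using component_backward_nbhd assms(1) by metis
  have "dist (fst p, snd p - d / 2) p < d"
    using \<open>0 < d\<close> by (simp add: dist_prod_def dist_real_def prod_eq_iff)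
  then have "(fst p, snd p - d / 2) \<in> closure G"
    using nbhd \<open>0 < d\<close> closure_subset by fastforce
  then show False
    using assms(3) \<open>0 < d\<close> by fastforce
qed

lemma compact_sublevel_part:
  "compact {p \<in> closure G. snd p \<le> s \<and> h (fst p) (snd p) \<le> C}"
proof -
  have "continuous_on (closure G) (\<lambda>p. (snd p, h (fst p) (snd p)))"
    using closure_component_subset_rect
    by (intro continuous_intros continuous_on_subset[OF continuous_on_h])
  from continuous_compact_preimage[OF this compact_closure_component closed_Times[OF closed_atMost closed_atMost]]
  show ?thesis by simp
qed

lemma closure_component_axis_values:
  assumes nb: "G \<inter> parabolic_boundary = {}" and p: "p \<in> closure G" "fst p = 0"
    and "h (fst p) (snd p) < h2 (fst p) (snd p)"
  shows "h (fst p) (snd p) = h1 (fst p) (snd p)"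
proof -
  have "p \<notin> G" using nb p(2) by blast
  then show ?thesis
    using closure_component_boundary_values[OF p(1)] assms(4) by auto
qed

lemma closure_component_sin_double_mono:
  assumes oc: "origin_cond T h h1"
    and C: "\<forall>p\<in>closure G. h1 (fst p) (snd p) < C \<and> C < h2 (fst p) (snd p)"
    and nb: "G \<inter> parabolic_boundary = {}"
    and Q: "compact Q" "Q \<subseteq> closure G" and below: "\<forall>p\<in>Q. h (fst p) (snd p) < C"
  obtains \<delta> where "0 < \<delta>"
    "\<forall>p\<in>Q. fst p < \<delta> \<longrightarrow> h1 (fst p) (snd p) \<le> h (fst p) (snd p) \<longrightarrow>
       sin (2 * h1 (fst p) (snd p)) \<le> sin (2 * h (fst p) (snd p))"
proof -
  have Q_rect: "Q \<subseteq> Rect"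
    using Q(2) closure_component_subset_rect by blast
  have "\<forall>p\<in>Q. fst p = 0 \<longrightarrow> h (fst p) (snd p) = h1 (fst p) (snd p)"
    using closure_component_axis_values[OF nb] Q(2) below C by (meson less_trans subsetD)
  then show ?thesis
    using origin_cond_sin_double_mono[OF oc Q(1) subset_trans[OF Q_rect rect_subset_dom_closed]
      continuous_on_subset[OF continuous_on_h Q_rect] continuous_on_subset[OF continuous_on_h1 Q_rect]] that
    by blast
qed

lemma component_sublevel_backward_nbhd:
  assumes nb: "G \<inter> parabolic_boundary = {}" and p: "p \<in> closure G"
    and "h1 (fst p) (snd p) < h (fst p) (snd p)" "h (fst p) (snd p) < C" "C < h2 (fst p) (snd p)"
  obtains d where "0 < d" "(fst p, snd p) \<in> dom_open T"
    "\<And>y t. dist (y, t) p < d \<Longrightarrow> t \<le> snd p \<Longrightarrow> (y, t) \<in> G \<and> h y t < C"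
proof -
  have "p \<in> Rect" using p closure_component_subset_rect by blast
  then have "p \<in> G"
    using p assms(3-5) by (intro closure_component_inter_between) (auto simp: between_set_eq)
  then obtain d where "0 < d" "0 < fst p" "fst p < R" "t1 < snd p"
    and backward: "\<And>y t. dist (y, t) p < d \<Longrightarrow> t \<le> snd p \<Longrightarrow> (y, t) \<in> G"
    using component_backward_nbhd nb by metis
  obtain \<rho> where "0 < \<rho>" and below: "\<forall>y\<in>Rect. dist y p < \<rho> \<longrightarrow> h (fst y) (snd y) < C"
    using continuous_on_less_nbhd[OF continuous_on_h \<open>p \<in> Rect\<close> assms(4)] by blast
  have "(y, t) \<in> G \<and> h y t < C" if "dist (y, t) p < min d \<rho>" "t \<le> snd p" for y t
  proof -
    have "(y, t) \<in> G" using backward that by simp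
    moreover from this have "(y, t) \<in> Rect" using component_subset by (auto simp: between_set_eq)
    ultimately show ?thesis using below that by auto
  qed
  moreover have "(fst p, snd p) \<in> dom_open T"
    using \<open>0 < fst p\<close> \<open>fst p < R\<close> \<open>t1 < snd p\<close> \<open>p \<in> Rect\<close> rect_subset_dom_closed R1 t1
    by (fastforce simp: dom_open_def dom_closed_def)
  ultimately show ?thesis
    using that[of "min d \<rho>"] \<open>0 < d\<close> \<open>0 < \<rho>\<close> by auto
qed

lemma component_slab_above_level:
  assumes oc: "origin_cond T h h1"
    and C: "\<forall>p\<in>closure G. h1 (fst p) (snd p) < C \<and> C < h2 (fst p) (snd p)"
    and nb: "G \<inter> parabolic_boundary = {}"
    and q: "q \<in> G" and slab: "\<forall>p\<in>closure G. snd p \<le> snd q \<longrightarrow> h (fst p) (snd p) \<noteq> C"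
  shows "C \<le> h (fst q) (snd q)"
proof (rule ccontr)
  assume "\<not> C \<le> h (fst q) (snd q)"
  define Q where "Q = {p \<in> closure G. snd p \<le> snd q \<and> h (fst p) (snd p) \<le> C}"
  have "compact Q" unfolding Q_def by (rule compact_sublevel_part)
  have Q_closure: "Q \<subseteq> closure G" and "q \<in> Q"
    using q closure_subset \<open>\<not> C \<le> h (fst q) (snd q)\<close> by (auto simp: Q_def)
  have Q_below: "h (fst p) (snd p) < C" if "p \<in> Q" for p
    using that slab Q_closure unfolding Q_def by (auto simp: less_le)
  obtain \<delta> where "0 < \<delta>" and \<delta>: "\<forall>p\<in>Q. fst p < \<delta> \<longrightarrow> h1 (fst p) (snd p) \<le> h (fst p) (snd p) \<longrightarrow>
      sin (2 * h1 (fst p) (snd p)) \<le> sin (2 * h (fst p) (snd p))"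
    using closure_component_sin_double_mono[OF oc C nb \<open>compact Q\<close> Q_closure] Q_below by blast
  define \<mu> where "\<mu> = (real k)^2 / \<delta>^2 + 1"
  define v where "v p = exp (- \<mu> * snd p) * (h (fst p) (snd p) - h1 (fst p) (snd p))" for p
  have "continuous_on Q v"
    unfolding v_def
    using Q_closure closure_component_subset_rect
    by (intro continuous_intros continuous_on_subset[OF continuous_on_h] continuous_on_subset[OF continuous_on_h1]) auto
  then obtain p where "p \<in> Q" and p_max: "\<forall>y\<in>Q. v y \<le> v p"
    using continuous_attains_sup[OF \<open>compact Q\<close>] \<open>q \<in> Q\<close> by blast
  have "0 < v q"
    using q component_subset by (auto simp: v_def between_set_eq)
  then have "0 < v p"
    using p_max \<open>q \<in> Q\<close> by (blast intro: less_le_trans)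
  then have W: "h1 (fst p) (snd p) < h (fst p) (snd p)"
    by (simp add: v_def zero_less_mult_iff)
  have "C < h2 (fst p) (snd p)"
    using C \<open>p \<in> Q\<close> Q_closure by blast
  then obtain d where "0 < d" "(fst p, snd p) \<in> dom_open T"
    and nbhd: "\<And>y t. dist (y, t) p < d \<Longrightarrow> t \<le> snd p \<Longrightarrow> (y, t) \<in> G \<and> h y t < C"
    using component_sublevel_backward_nbhd[OF nb _ W Q_below[OF \<open>p \<in> Q\<close>]] \<open>p \<in> Q\<close> Q_closure by blast
  have "\<forall>y t. dist (y, t) (fst p, snd p) < d \<longrightarrow> t \<le> snd p \<longrightarrow>
      exp (- \<mu> * t) * (h y t - h1 y t) \<le> exp (- \<mu> * snd p) * (h (fst p) (snd p) - h1 (fst p) (snd p))"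
  proof (intro allI impI)
    fix y t assume "dist (y, t) (fst p, snd p) < d" "t \<le> snd p"
    then have "(y, t) \<in> Q"
      using nbhd[of y t] closure_subset \<open>p \<in> Q\<close> by (auto simp: Q_def)
    then show "exp (- \<mu> * t) * (h y t - h1 y t) \<le> exp (- \<mu> * snd p) * (h (fst p) (snd p) - h1 (fst p) (snd p))"
      using p_max by (auto simp: v_def)
  qed
  then show False
    using classical_sol_diff_no_positive_backward_max[OF sol_h sol_h1 \<open>(fst p, snd p) \<in> dom_open T\<close> \<open>0 < d\<close> \<open>0 < \<delta>\<close>]
      W \<delta> \<open>p \<in> Q\<close> unfolding \<mu>_def by auto
qed

lemma earliest_level_free_slab:
  assumes nb: "G \<inter> parabolic_boundary = {}"
    and C: "\<forall>p\<in>closure G. h1 (fst p) (snd p) < C \<and> C < h2 (fst p) (snd p)"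
  obtains q where "q \<in> G" "\<forall>p\<in>closure G. snd p \<le> snd q \<longrightarrow> h (fst p) (snd p) \<noteq> C"
proof -
  have "closure G \<noteq> {}" using x_in_component closure_subset by blast
  then obtain p0 where "p0 \<in> closure G" and p0_min: "\<forall>y\<in>closure G. snd p0 \<le> snd y"
    using continuous_attains_inf[OF compact_closure_component _ continuous_on_snd[OF continuous_on_id]] by blast
  have earliest_off_level: "h (fst p) (snd p) \<noteq> C" if "p \<in> closure G" "snd p = snd p0" for p
  proof -
    have "p \<notin> G"
      using earliest_point_not_in_component[OF nb that(1)] p0_min that(2) by simp
    then show ?thesis
      using closure_component_boundary_values[OF that(1)] C that(1) by force
  qed
  define L where "L = {p \<in> closure G. h (fst p) (snd p) \<in> {C}}"
  have "compact L"
    unfolding L_def using closure_component_subset_rect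
    by (intro continuous_compact_preimage compact_closure_component continuous_on_subset[OF continuous_on_h]) auto
  obtain tC where "snd p0 < tC" and below_tC: "\<forall>p\<in>closure G. snd p < tC \<longrightarrow> h (fst p) (snd p) \<noteq> C"
  proof (cases "L = {}")
    case True
    then show ?thesis using that[of "snd p0 + 1"] by (auto simp: L_def)
  next
    case False
    then obtain pC where "pC \<in> L" and pC_min: "\<forall>y\<in>L. snd pC \<le> snd y"
      using continuous_attains_inf[OF \<open>compact L\<close> _ continuous_on_snd[OF continuous_on_id]] by blast
    then have "snd p0 < snd pC"
      using p0_min earliest_off_level by (fastforce simp: L_def less_le)
    moreover have "\<forall>p\<in>closure G. snd p < snd pC \<longrightarrow> h (fst p) (snd p) \<noteq> C"
      using pC_min by (fastforce simp: L_def)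
    ultimately show ?thesis using that by blast
  qed
  obtain q where "q \<in> G" "dist q p0 < tC - snd p0"
    using \<open>p0 \<in> closure G\<close> \<open>snd p0 < tC\<close> closure_approachable by (metis diff_gt_0_iff_gt)
  moreover have "snd q < tC"
    using dist_snd_le[of q p0] \<open>dist q p0 < tC - snd p0\<close> by (simp add: dist_real_def)
  ultimately show ?thesis
    using that below_tC by fastforce
qed

lemma component_meets_parabolic_boundary:
  assumes oc1: "origin_cond T h h1" and oc2: "origin_cond T h h2"
    and C: "\<forall>p\<in>closure G. h1 (fst p) (snd p) < C \<and> C < h2 (fst p) (snd p)"
  shows "G \<inter> parabolic_boundary \<noteq> {}"
proof
  assume nb: "G \<inter> parabolic_boundary = {}"
  obtain q where "q \<in> G" and slab: "\<forall>p\<in>closure G. snd p \<le> snd q \<longrightarrow> h (fst p) (snd p) \<noteq> C"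
    using earliest_level_free_slab[OF nb C] by blast
  have "C \<le> h (fst q) (snd q)"
    using component_slab_above_level[OF oc1 C nb \<open>q \<in> G\<close> slab] .
  \<comment> \<open>the reverse inequality is the same statement for - h, which lies between - h2 and - h1\<close>
  moreover interpret neg: between_component k T t1 t2 R "\<lambda>r t. - h r t" "\<lambda>r t. - h2 r t" "\<lambda>r t. - h1 r t" x G
    using t1 t2T R1 classical_sol_uminus[OF sol_h] classical_sol_uminus[OF sol_h1]
      classical_sol_uminus[OF sol_h2] x_between G_eq
    by unfold_locales (simp_all add: between_set_uminus)
  have "- C \<le> - h (fst q) (snd q)"
    using C slab by (intro neg.component_slab_above_level[OF origin_cond_uminus[OF oc2] _ nb \<open>q \<in> G\<close>]) auto
  ultimately show False
    using slab \<open>q \<in> G\<close> closure_subset by fastforce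
qed

lemma closure_component_off_axis:
  assumes "\<forall>t. 0 \<le> t \<and> ereal t < T \<longrightarrow> h 0 t < h1 0 t" and "p \<in> closure G"
  shows "0 < fst p"
proof -
  have "p \<in> dom_closed T"
    using assms(2) closure_component_subset_rect rect_subset_dom_closed by blast
  moreover have "h1 (fst p) (snd p) \<le> h (fst p) (snd p)"
    using closure_component_between(1)[OF assms(2)] .
  ultimately show ?thesis
    using assms(1) by (cases "fst p = 0") (auto simp: dom_closed_def)
qed

lemma barrier_level_exists:
  assumes h0: "\<forall>t. 0 \<le> t \<and> ereal t < T \<longrightarrow> h 0 t = 0"
    and h1: "h1 = (\<lambda>r t. pi / 2) \<or> (\<exists>\<alpha>>0. h1 = (\<lambda>r t. pi - 2 * arctan (\<alpha> ^ k * r ^ k)))"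
    and h2: "h2 = (\<lambda>r t. pi)"
  obtains C where "\<forall>p\<in>closure G. h1 (fst p) (snd p) < C \<and> C < h2 (fst p) (snd p)"
proof -
  have "0 < h1 r t" for r t
    using h1 pi_minus_double_arctan_pos by auto
  then have off_axis: "0 < fst p" if "p \<in> closure G" for p
    using closure_component_off_axis[OF _ that] h0 by simp
  have "h1 (fst p) (snd p) < pi" if "p \<in> closure G" for p
    using h1 off_axis[OF that] by (auto simp: pi_minus_double_arctan_less_pi)
  moreover have "continuous_on (closure G) (\<lambda>p. h1 (fst p) (snd p))"
    using continuous_on_h1 closure_component_subset_rect by (rule continuous_on_subset)
  ultimately obtain C where "\<forall>p\<in>closure G. h1 (fst p) (snd p) < C \<and> C < pi"
    using compact_continuous_below_level[OF compact_closure_component] by blast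
  then show ?thesis
    using that h2 by simp
qed

end

theorem mainTheorem17:
  shows
  "(\<forall>(k::nat) (T::ereal) (t1::real) t2 (R::real) h h1 h2 \<Gamma> (C::real).
      0 \<le> t1 \<and> t1 < t2 \<and> ereal t2 < T \<and> 0 < R \<and> R \<le> 1 \<and>
      classical_sol k T h \<and> classical_sol k T h1 \<and> classical_sol k T h2 \<and>
      origin_cond T h h1 \<and> origin_cond T h h2 \<and>
      \<Gamma> \<noteq> {} \<and>
      (\<exists>x\<in>between_set R t1 t2 h h1 h2. \<Gamma> = connected_component_set (between_set R t1 t2 h h1 h2) x) \<and>
      (\<forall>p\<in>closure \<Gamma>. h1 (fst p) (snd p) < C \<and> C < h2 (fst p) (snd p))
      \<longrightarrow> \<Gamma> \<inter> ({p. fst p = 0} \<union> {p. fst p = R} \<union> {p. snd p = t1}) \<noteq> {})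
   \<and>
   (\<forall>(k::nat) (T::ereal) h h1 h2.
      classical_sol k T h \<and> (\<forall>t. 0 \<le> t \<and> ereal t < T \<longrightarrow> h 0 t = 0) \<and>
      (h1 = (\<lambda>r t. pi / 2) \<or> (\<exists>\<alpha>::real. \<alpha> > 0 \<and> h1 = (\<lambda>r t. pi - 2 * arctan (\<alpha> ^ k * r ^ k)))) \<and>
      h2 = (\<lambda>r t. pi)
      \<longrightarrow> classical_sol k T h1 \<and> classical_sol k T h2 \<and>
          origin_cond T h h1 \<and> origin_cond T h h2 \<and>
          (\<forall>(t1::real) t2 (R::real) \<Gamma>.
              0 \<le> t1 \<and> t1 < t2 \<and> ereal t2 < T \<and> 0 < R \<and> R \<le> 1 \<and> \<Gamma> \<noteq> {} \<and>
              (\<exists>x\<in>between_set R t1 t2 h h1 h2. \<Gamma> = connected_component_set (between_set R t1 t2 h h1 h2) x)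
              \<longrightarrow> (\<exists>C::real. \<forall>p\<in>closure \<Gamma>. h1 (fst p) (snd p) < C \<and> C < h2 (fst p) (snd p))))"
proof (rule conjI; intro allI impI; elim conjE bexE)
  fix k T t1 t2 R h h1 h2 \<Gamma> C x
  assume hyps: "0 \<le> t1" "t1 < t2" "ereal t2 < T" "0 < R" "R \<le> 1" "classical_sol k T h"
    "classical_sol k T h1" "classical_sol k T h2" "origin_cond T h h1" "origin_cond T h h2" "\<Gamma> \<noteq> {}"
    "x \<in> between_set R t1 t2 h h1 h2" "\<Gamma> = connected_component_set (between_set R t1 t2 h h1 h2) x"
    "\<forall>p\<in>closure \<Gamma>. h1 (fst p) (snd p) < C \<and> C < h2 (fst p) (snd p)"
  then interpret between_component k T t1 t2 R h h1 h2 x \<Gamma>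
    by unfold_locales
  show "\<Gamma> \<inter> ({p. fst p = 0} \<union> {p. fst p = R} \<union> {p. snd p = t1}) \<noteq> {}"
    using component_meets_parabolic_boundary hyps(9,10,14) .
next
  fix k :: nat and T :: ereal and h h1 h2 :: "real \<Rightarrow> real \<Rightarrow> real"
  assume sol: "classical_sol k T h" and h0: "\<forall>t. 0 \<le> t \<and> ereal t < T \<longrightarrow> h 0 t = 0"
    and h1: "h1 = (\<lambda>r t. pi / 2) \<or> (\<exists>\<alpha>>0. h1 = (\<lambda>r t. pi - 2 * arctan (\<alpha> ^ k * r ^ k)))"
    and h2: "h2 = (\<lambda>r t. pi)"
  note barriers = stationary_barriers[where h = h, OF h0 h1 h2]
  have "\<exists>C. \<forall>p\<in>closure \<Gamma>. h1 (fst p) (snd p) < C \<and> C < h2 (fst p) (snd p)"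
    if "0 \<le> t1" "t1 < t2" "ereal t2 < T" "0 < R" "R \<le> 1"
      "x \<in> between_set R t1 t2 h h1 h2" "\<Gamma> = connected_component_set (between_set R t1 t2 h h1 h2) x"
    for t1 t2 R \<Gamma> x
  proof -
    interpret between_component k T t1 t2 R h h1 h2 x \<Gamma>
      using that sol barriers by unfold_locales
    show ?thesis using barrier_level_exists[OF h0 h1 h2] by blast
  qed
  then show "classical_sol k T h1 \<and> classical_sol k T h2 \<and> origin_cond T h h1 \<and> origin_cond T h h2 \<and>
      (\<forall>t1 t2 R \<Gamma>. 0 \<le> t1 \<and> t1 < t2 \<and> ereal t2 < T \<and> 0 < R \<and> R \<le> 1 \<and> \<Gamma> \<noteq> {} \<and>
        (\<exists>x\<in>between_set R t1 t2 h h1 h2. \<Gamma> = connected_component_set (between_set R t1 t2 h h1 h2) x) \<longrightarrow>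
        (\<exists>C. \<forall>p\<in>closure \<Gamma>. h1 (fst p) (snd p) < C \<and> C < h2 (fst p) (snd p)))"
    using barriers by blast
qed

end
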